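(* Let $n\ge 2$ and let $\mathsf{M}$ be a square submatrix of a matrix in $\mathscr{D}_n$. Then $$|\det\mathsf{M}|\in\{0,2^0,2^1,\dots,2^{\lfloor n/2\rfloor}\}.$$
   Context: Let $e_1,\dots,e_n$ be the standard basis of $\mathbb{R}^n$ and $[\pm n]=\{-n,\dots,-1,1,\dots,n\}$. For $i\in[n-1]$ and $r\in[\pm n]$ with $i<|r|$, set $d(i,r)=e_i+\mathrm{sgn}(r)\,e_{|r|}\in\mathbb{R}^n$. $\mathscr{D}_n$ denotes the set of $n\times n$ real matrices each of whose rows is of the form $d(i,r)$ for some such $i,r$ (rows may repeat). A square submatrix is obtained by deleting some rows and the same number of columns. *)

theory Defs
  imports "Jordan_Normal_Form.Determinant" "Jordan_Normal_Form.DL_Submatrix"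
begin

text \<open>Coordinates of R^n are numbered 1..n in the paper; in the
  JNF vector type index j (0-based) corresponds to coordinate j+1.
  An index r in [+-n] is an integer with r \<noteq> 0 and |r| \<le> n.\<close>

definition valid_pair :: "nat \<Rightarrow> nat \<Rightarrow> int \<Rightarrow> bool" where
  "valid_pair n i r \<longleftrightarrow> 1 \<le> i \<and> i \<le> n - 1 \<and> r \<noteq> 0 \<and> \<bar>r\<bar> \<le> int n \<and> int i < \<bar>r\<bar>"

definition dvec :: "nat \<Rightarrow> nat \<Rightarrow> int \<Rightarrow> real vec" where
  "dvec n i r = vec n (\<lambda>j. (if j + 1 = i then 1 else 0)
                         + (if int (j + 1) = \<bar>r\<bar> then real_of_int (sgn r) else 0))"

definition in_Dn :: "nat \<Rightarrow> real mat \<Rightarrow> bool" where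
  "in_Dn n D \<longleftrightarrow> D \<in> carrier_mat n n \<and>
     (\<forall>k<n. \<exists>i r. valid_pair n i r \<and> row D k = dvec n i r)"

end

theory Submission
  imports Defs
begin

text \<open>Every matrix in \<open>\<D>\<^sub>n\<close>, and every square submatrix of one, has entries in
  \<open>{-1, 0, 1}\<close> and at most two nonzero entries per row; the bound holds for all such
  \<open>k \<times> k\<close> matrices, by induction on \<open>k\<close>. Counting nonzero entries gives a column \<open>c\<close>
  with at most two of them. With at most one, Laplace expansion along \<open>c\<close> reduces to size
  \<open>k - 1\<close>. With two, in rows \<open>p\<close> and \<open>q\<close>, adding \<open>\<plusminus>\<close> row \<open>p\<close> to row \<open>q\<close> clears the
  entry \<open>(q, c)\<close>. Either the new matrix is again of the same kind, now with a single entry in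
  column \<open>c\<close>, or rows \<open>p\<close> and \<open>q\<close> were supported on the same two columns and the new
  row \<open>q\<close> is \<open>\<plusminus>2\<close> times a unit vector. Expanding along it costs a factor \<open>2\<close> and
  leaves a matrix whose column \<open>c\<close> has a single entry, so a further expansion is free:
  each factor \<open>2\<close> uses up two dimensions.\<close>

definition row_support :: "'a::zero mat \<Rightarrow> nat \<Rightarrow> nat set" where
  "row_support A i = {j. j < dim_col A \<and> A $$ (i, j) \<noteq> 0}"

definition col_support :: "'a::zero mat \<Rightarrow> nat \<Rightarrow> nat set" where
  "col_support A j = {i. i < dim_row A \<and> A $$ (i, j) \<noteq> 0}"

definition sparse_sign_mat :: "'a::linordered_idom mat \<Rightarrow> bool" where
  "sparse_sign_mat A \<longleftrightarrow>
     (\<forall>i<dim_row A. \<forall>j<dim_col A. A $$ (i, j) \<in> {-1, 0, 1}) \<and>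
     (\<forall>i<dim_row A. card (row_support A i) \<le> 2)"

definition det_values :: "nat \<Rightarrow> 'a::linordered_idom set" where
  "det_values k = {0} \<union> {2 ^ m | m. m \<le> k div 2}"

lemma det_values_mono: "k \<le> l \<Longrightarrow> det_values k \<subseteq> det_values l"
  unfolding det_values_def using div_le_mono by fastforce

lemma double_mem_det_values:
  assumes "x \<in> det_values k"
  shows "2 * x \<in> det_values (k + 2)"
proof -
  have "2 * (2::'a) ^ m \<in> det_values (k + 2)" if "m \<le> k div 2" for m
    using that unfolding det_values_def by (auto intro!: exI[of _ "Suc m"])
  then show ?thesis using assms unfolding det_values_def by auto
qed

lemma card_le_two_eq_doubleton:
  assumes "finite S" "card S \<le> 2" "x \<in> S" "y \<in> S" "x \<noteq> y"
  shows "S = {x, y}"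
proof -
  have "{x, y} \<subseteq> S" using assms by auto
  moreover have "card S \<le> card {x, y}" using assms by simp
  ultimately show ?thesis using assms(1) card_seteq by blast
qed

lemma card_le_two_cases:
  assumes "finite S" "card S \<le> 2" "S \<subseteq> {..<k}" "0 < k"
  obtains p where "p < k" "S \<subseteq> {p}"
    | p q where "p < k" "q < k" "p \<noteq> q" "S = {p, q}"
proof -
  consider "card S = 0" | "card S = 1" | "card S = 2" using assms(2) by linarith
  then show thesis
  proof cases
    case 1
    then show thesis using that(1)[of 0] assms by simp
  next
    case 2
    then show thesis using that(1) assms(3) by (auto simp: card_1_singleton_iff)
  next
    case 3
    then show thesis using that(2) assms(3) by (auto simp: card_2_iff)
  qed
qed

lemma sum_card_row_support_eq_sum_card_col_support:
  fixes A :: "'a::zero mat"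
  shows "(\<Sum>i<dim_row A. card (row_support A i)) = (\<Sum>j<dim_col A. card (col_support A j))"
proof -
  have count: "card {x. x < n \<and> P x} = (\<Sum>x<n. if P x then 1 else 0)" for n and P :: "nat \<Rightarrow> bool"
    by (simp add: sum.If_cases Collect_conj_eq lessThan_def Int_commute)
  show ?thesis
    unfolding row_support_def col_support_def count by (rule sum.swap)
qed

lemma exists_col_support_card_le_two:
  assumes "A \<in> carrier_mat k k" "0 < k" "\<forall>i<k. card (row_support A i) \<le> 2"
  shows "\<exists>c<k. card (col_support A c) \<le> 2"
proof (rule ccontr)
  assume "\<not> ?thesis"
  then have "(\<Sum>c<k. 3) \<le> (\<Sum>c<k. card (col_support A c))"
    by (intro sum_mono) (fastforce simp: not_le)
  also have "\<dots> = (\<Sum>i<k. card (row_support A i))"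
    using sum_card_row_support_eq_sum_card_col_support[of A] assms(1) by simp
  also have "\<dots> \<le> (\<Sum>i<k. 2)"
    using assms(3) by (intro sum_mono) simp
  finally show False using assms(2) by simp
qed

lemma index_mat_delete:
  assumes "i < dim_row A - 1" "j < dim_col A - 1"
  shows "mat_delete A p c $$ (i, j) = A $$ (insert_index p i, insert_index c j)"
  using assms unfolding mat_delete_def insert_index_def by auto

lemma insert_index_less: "i < n - 1 \<Longrightarrow> insert_index p i < n"
  unfolding insert_index_def by auto

lemma delete_index_less: "c < n \<Longrightarrow> a < n \<Longrightarrow> c \<noteq> a \<Longrightarrow> delete_index a c < n - 1"
  unfolding delete_index_def by auto

lemma row_support_mat_delete:
  assumes "i < dim_row A - 1"
  shows "row_support (mat_delete A p c) i \<subseteq> delete_index c ` (row_support A (insert_index p i) - {c})"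
proof
  fix j assume "j \<in> row_support (mat_delete A p c) i"
  then have "j < dim_col A - 1" "A $$ (insert_index p i, insert_index c j) \<noteq> 0"
    using assms by (auto simp: row_support_def index_mat_delete)
  then have "insert_index c j \<in> row_support A (insert_index p i) - {c}"
    by (auto simp: row_support_def insert_index_less)
  then show "j \<in> delete_index c ` (row_support A (insert_index p i) - {c})"
    by (metis delete_insert_index image_eqI)
qed

lemma col_support_mat_delete:
  assumes "j < dim_col A - 1"
  shows "col_support (mat_delete A p c) j \<subseteq> delete_index p ` (col_support A (insert_index c j) - {p})"
proof
  fix i assume "i \<in> col_support (mat_delete A p c) j"
  then have "i < dim_row A - 1" "A $$ (insert_index p i, insert_index c j) \<noteq> 0"
    using assms by (auto simp: col_support_def index_mat_delete)
  then have "insert_index p i \<in> col_support A (insert_index c j) - {p}"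
    by (auto simp: col_support_def insert_index_less)
  then show "i \<in> delete_index p ` (col_support A (insert_index c j) - {p})"
    by (metis delete_insert_index image_eqI)
qed

lemma sparse_sign_mat_delete:
  assumes "sparse_sign_mat A"
  shows "sparse_sign_mat (mat_delete A p c)"
  unfolding sparse_sign_mat_def
proof (intro conjI allI impI)
  fix i j assume "i < dim_row (mat_delete A p c)" "j < dim_col (mat_delete A p c)"
  then show "mat_delete A p c $$ (i, j) \<in> {-1, 0, 1}"
    using assms by (auto simp: sparse_sign_mat_def index_mat_delete insert_index_less)
next
  fix i assume i: "i < dim_row (mat_delete A p c)"
  have "card (row_support (mat_delete A p c) i)
      \<le> card (delete_index c ` (row_support A (insert_index p i) - {c}))"
    using i row_support_mat_delete[of i A p c]
    by (intro card_mono) (auto simp: row_support_def)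
  also have "\<dots> \<le> card (row_support A (insert_index p i) - {c})"
    by (rule card_image_le) (simp add: row_support_def)
  also have "\<dots> \<le> card (row_support A (insert_index p i))"
    by (rule card_mono) (auto simp: row_support_def)
  also have "\<dots> \<le> 2"
    using assms i by (auto simp: sparse_sign_mat_def insert_index_less)
  finally show "card (row_support (mat_delete A p c) i) \<le> 2" .
qed

lemma mat_delete_cong_row:
  assumes "dim_row A = dim_row B" "dim_col A = dim_col B"
    and "\<And>i j. i < dim_row A \<Longrightarrow> j < dim_col A \<Longrightarrow> i \<noteq> q \<Longrightarrow> A $$ (i, j) = B $$ (i, j)"
  shows "mat_delete A q a = mat_delete B q a"
  using assms by (intro eq_matI) (auto simp: index_mat_delete insert_index_less)

lemma abs_cofactor: "\<bar>cofactor A i j\<bar> = \<bar>det (mat_delete A i j :: 'a::linordered_idom mat)\<bar>"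
  by (simp add: cofactor_def abs_mult power_abs)

lemma det_eq_cofactor_if_col_support:
  assumes "A \<in> carrier_mat k k" "p < k" "c < k" "col_support A c \<subseteq> {p}"
  shows "det A = A $$ (p, c) * cofactor A p c"
proof -
  have "det A = (\<Sum>i<k. A $$ (i, c) * cofactor A i c)"
    by (rule laplace_expansion_column[OF assms(1,3)])
  also have "\<dots> = A $$ (p, c) * cofactor A p c"
    using assms by (subst sum.remove[of _ p]) (auto intro!: sum.neutral simp: col_support_def)
  finally show ?thesis .
qed

lemma det_eq_cofactor_if_row_support:
  assumes "A \<in> carrier_mat k k" "q < k" "a < k" "row_support A q \<subseteq> {a}"
  shows "det A = A $$ (q, a) * cofactor A q a"
proof -
  have "det A = (\<Sum>j<k. A $$ (q, j) * cofactor A q j)"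
    by (rule laplace_expansion_row[OF assms(1,2)])
  also have "\<dots> = A $$ (q, a) * cofactor A q a"
    using assms by (subst sum.remove[of _ a]) (auto intro!: sum.neutral simp: row_support_def)
  finally show ?thesis .
qed

lemma abs_det_mem_det_values_if_col_support:
  fixes A :: "'a::linordered_idom mat"
  assumes IH: "\<And>M :: 'a mat. M \<in> carrier_mat l l \<Longrightarrow> sparse_sign_mat M \<Longrightarrow> \<bar>det M\<bar> \<in> det_values l"
    and A: "A \<in> carrier_mat (Suc l) (Suc l)" "sparse_sign_mat A"
    and "p < Suc l" "c < Suc l" "col_support A c \<subseteq> {p}"
  shows "\<bar>det A\<bar> \<in> det_values l"
proof -
  have "det A = A $$ (p, c) * cofactor A p c"
    using assms by (intro det_eq_cofactor_if_col_support)
  moreover have "A $$ (p, c) \<in> {-1, 0, 1}"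
    using assms by (simp add: sparse_sign_mat_def)
  moreover have "\<bar>det (mat_delete A p c)\<bar> \<in> det_values l"
    using IH mat_delete_carrier[OF A(1)] sparse_sign_mat_delete[OF A(2)] by simp
  ultimately show ?thesis
    by (auto simp: abs_mult abs_cofactor det_values_def)
qed

lemma sparse_sign_addrow:
  fixes A :: "'a::linordered_idom mat"
  assumes A: "A \<in> carrier_mat k k" "sparse_sign_mat A"
    and pq: "p < k" "q < k" and c: "c \<in> row_support A p" "c \<in> row_support A q"
    and cancel: "addrow x q p A $$ (q, c) = 0"
    and entries: "\<forall>j<k. addrow x q p A $$ (q, j) \<in> {-1, 0, 1}"
  shows "sparse_sign_mat (addrow x q p A)"
  unfolding sparse_sign_mat_def
proof (intro conjI allI impI)
  fix i j assume "i < dim_row (addrow x q p A)" "j < dim_col (addrow x q p A)"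
  then show "addrow x q p A $$ (i, j) \<in> {-1, 0, 1}"
    using A entries by (cases "i = q") (auto simp: sparse_sign_mat_def)
next
  have row: "card (row_support A i) \<le> 2" if "i < k" for i
    using A that by (simp add: sparse_sign_mat_def)
  fix i assume i: "i < dim_row (addrow x q p A)"
  have "row_support (addrow x q p A) i = row_support A i" if "i \<noteq> q"
    using that i A by (auto simp: row_support_def)
  moreover have "card (row_support (addrow x q p A) q) \<le> 2"
  proof -
    have "row_support (addrow x q p A) q \<subseteq> (row_support A p - {c}) \<union> (row_support A q - {c})"
      using A pq cancel by (auto simp: row_support_def)
    then have "card (row_support (addrow x q p A) q)
        \<le> card ((row_support A p - {c}) \<union> (row_support A q - {c}))"
      by (intro card_mono) (auto simp: row_support_def)
    also have "\<dots> \<le> card (row_support A p - {c}) + card (row_support A q - {c})"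
      by (rule card_Un_le)
    also have "\<dots> \<le> 2"
      using c row[OF pq(1)] row[OF pq(2)] by (simp add: row_support_def card_Diff_singleton)
    finally show ?thesis .
  qed
  ultimately show "card (row_support (addrow x q p A) i) \<le> 2"
    using row i A by (cases "i = q") auto
qed

lemma abs_det_eq_if_addrow_row_support:
  fixes A :: "'a::linordered_idom mat"
  assumes A: "A \<in> carrier_mat k k"
    and "p < k" "q < k" "p \<noteq> q" "a < k" "row_support (addrow x q p A) q \<subseteq> {a}"
  shows "\<bar>det A\<bar> = \<bar>addrow x q p A $$ (q, a)\<bar> * \<bar>det (mat_delete A q a)\<bar>"
proof -
  have B: "addrow x q p A \<in> carrier_mat k k"
    using A by simp
  have "det A = det (addrow x q p A)"
    using assms by (intro det_addrow[symmetric]) auto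
  also have "\<dots> = addrow x q p A $$ (q, a) * cofactor (addrow x q p A) q a"
    using B assms by (intro det_eq_cofactor_if_row_support)
  finally have "\<bar>det A\<bar> = \<bar>addrow x q p A $$ (q, a)\<bar> * \<bar>det (mat_delete (addrow x q p A) q a)\<bar>"
    by (simp add: abs_mult abs_cofactor)
  moreover have "mat_delete (addrow x q p A) q a = mat_delete A q a"
    using A by (intro mat_delete_cong_row) auto
  ultimately show ?thesis by simp
qed

lemma abs_det_eq_double_if_rows_share_support:
  fixes A :: "'a::linordered_idom mat"
  assumes A: "A \<in> carrier_mat k k"
    and pq: "p < k" "q < k" "p \<noteq> q" and a: "a < k"
    and supp: "row_support A p = {a, c}" "row_support A q = {a, c}"
    and cancel: "addrow x q p A $$ (q, c) = 0" and two: "\<bar>addrow x q p A $$ (q, a)\<bar> = 2"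
  shows "\<bar>det A\<bar> = 2 * \<bar>det (mat_delete A q a)\<bar>"
proof -
  have "row_support (addrow x q p A) q \<subseteq> {a}"
  proof
    fix j assume j: "j \<in> row_support (addrow x q p A) q"
    then have "j < k" using A by (simp add: row_support_def)
    have "j \<in> {a, c}"
    proof (rule ccontr)
      assume "j \<notin> {a, c}"
      then have "A $$ (p, j) = 0" "A $$ (q, j) = 0"
        using supp \<open>j < k\<close> A by (auto simp: row_support_def set_eq_iff)
      then show False using j A pq(2) \<open>j < k\<close> by (simp add: row_support_def)
    qed
    then show "j \<in> {a}" using j cancel by (auto simp: row_support_def)
  qed
  then show ?thesis
    using abs_det_eq_if_addrow_row_support[OF A pq a] two by simp
qed

lemma col_support_mat_delete_subset:
  assumes "A \<in> carrier_mat k k" "a < k" "c < k" "a \<noteq> c" "p \<noteq> q" "col_support A c = {p, q}"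
  shows "col_support (mat_delete A q a) (delete_index a c) \<subseteq> {delete_index q p}"
proof -
  have "col_support (mat_delete A q a) (delete_index a c) \<subseteq> delete_index q ` (col_support A c - {q})"
    using col_support_mat_delete[of "delete_index a c" A q a] assms
      delete_index_less[of c k a] insert_delete_index[of c a]
    by simp
  also have "\<dots> = {delete_index q p}" using assms(5,6) by auto
  finally show ?thesis .
qed

lemma abs_det_mem_det_values_if_addrow_clears_col:
  fixes A :: "'a::linordered_idom mat"
  assumes IH: "\<And>M :: 'a mat. M \<in> carrier_mat l l \<Longrightarrow> sparse_sign_mat M \<Longrightarrow> \<bar>det M\<bar> \<in> det_values l"
    and A: "A \<in> carrier_mat (Suc l) (Suc l)"
    and pq: "p < Suc l" "q < Suc l" "p \<noteq> q" and c: "c < Suc l" and col: "col_support A c = {p, q}"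
    and cancel: "addrow x q p A $$ (q, c) = 0" and sparse: "sparse_sign_mat (addrow x q p A)"
  shows "\<bar>det A\<bar> \<in> det_values l"
proof -
  have "col_support (addrow x q p A) c \<subseteq> {p}"
  proof
    fix i assume "i \<in> col_support (addrow x q p A) c"
    then have "i < Suc l" "addrow x q p A $$ (i, c) \<noteq> 0" "i \<noteq> q"
      using A cancel by (auto simp: col_support_def)
    then show "i \<in> {p}"
      using col A c by (auto simp: col_support_def)
  qed
  then have "\<bar>det (addrow x q p A)\<bar> \<in> det_values l"
    using abs_det_mem_det_values_if_col_support[OF IH _ sparse pq(1) c] A by simp
  moreover have "det (addrow x q p A) = det A"
    using pq A by (intro det_addrow) auto
  ultimately show ?thesis by simp
qed

lemma abs_det_mem_det_values_if_two_in_col: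
  fixes A :: "'a::linordered_idom mat"
  assumes IH: "\<And>l (M :: 'a mat). l < k \<Longrightarrow> M \<in> carrier_mat l l \<Longrightarrow> sparse_sign_mat M \<Longrightarrow> \<bar>det M\<bar> \<in> det_values l"
    and A: "A \<in> carrier_mat k k" and sparse: "sparse_sign_mat A"
    and c: "c < k" and pq: "p < k" "q < k" "p \<noteq> q" and col: "col_support A c = {p, q}"
  shows "\<bar>det A\<bar> \<in> det_values k"
proof -
  obtain l where k: "k = Suc l" using c by (cases k) auto
  have entry: "A $$ (i, j) \<in> {-1, 0, 1}" if "i < k" "j < k" for i j
    using sparse A that by (simp add: sparse_sign_mat_def)
  have row: "card (row_support A i) \<le> 2" if "i < k" for i
    using sparse A that by (simp add: sparse_sign_mat_def)
  have unit: "A $$ (p, c) \<in> {-1, 1}" "A $$ (q, c) \<in> {-1, 1}"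
    using col entry[OF pq(1) c] entry[OF pq(2) c] by (auto simp: col_support_def set_eq_iff)
  then have c_supp: "c \<in> row_support A p" "c \<in> row_support A q"
    using A c by (auto simp: row_support_def)
  \<comment> \<open>\<open>s * A $$ (p, c) = A $$ (q, c)\<close> because \<open>A $$ (p, c)\<^sup>2 = 1\<close>\<close>
  define s where "s = A $$ (q, c) * A $$ (p, c)"
  define B where "B = addrow (-s) q p A"
  have B_row: "B $$ (q, j) = A $$ (q, j) - s * A $$ (p, j)" if "j < k" for j
    using A pq that by (simp add: B_def)
  have Bqc: "B $$ (q, c) = 0"
    using unit B_row[OF c] by (auto simp: s_def)
  show ?thesis
  proof (cases "\<forall>j<k. B $$ (q, j) \<in> {-1, 0, 1}")
    case True
    then have "sparse_sign_mat B"
      using sparse_sign_addrow[OF A sparse pq(1,2) c_supp] Bqc unfolding B_def by blast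
    moreover have "\<And>M :: 'a mat. M \<in> carrier_mat l l \<Longrightarrow> sparse_sign_mat M \<Longrightarrow> \<bar>det M\<bar> \<in> det_values l"
      using IH[of l] k by simp
    ultimately have "\<bar>det A\<bar> \<in> det_values l"
      using A pq c col Bqc unfolding B_def k by (metis abs_det_mem_det_values_if_addrow_clears_col)
    then show ?thesis
      using det_values_mono[of l k] k by auto
  next
    case False
    then obtain a where a: "a < k" "B $$ (q, a) \<notin> {-1, 0, 1}" by auto
    have nonzero: "A $$ (p, a) \<noteq> 0" "A $$ (q, a) \<noteq> 0" and two: "\<bar>B $$ (q, a)\<bar> = 2"
      using a(2) B_row[OF a(1)] entry[OF pq(1) a(1)] entry[OF pq(2) a(1)] unit by (auto simp: s_def)
    have "a \<noteq> c" using a(2) Bqc by auto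
    have "row_support A i = {a, c}" if "i \<in> {p, q}" for i
      using that row[OF pq(1)] row[OF pq(2)] nonzero unit A a(1) c \<open>a \<noteq> c\<close>
      by (intro card_le_two_eq_doubleton) (auto simp: row_support_def)
    then have det_A: "\<bar>det A\<bar> = 2 * \<bar>det (mat_delete A q a)\<bar>"
      using abs_det_eq_double_if_rows_share_support[OF A pq a(1)] Bqc two unfolding B_def by simp
    obtain l' where l: "l = Suc l'" using pq k by (cases l) auto
    have "\<And>M :: 'a mat. M \<in> carrier_mat l' l' \<Longrightarrow> sparse_sign_mat M \<Longrightarrow> \<bar>det M\<bar> \<in> det_values l'"
      using IH[of l'] k l by simp
    moreover have "mat_delete A q a \<in> carrier_mat (Suc l') (Suc l')"
      using mat_delete_carrier[OF A] k l by simp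
    moreover have "delete_index q p < Suc l'" "delete_index a c < Suc l'"
      using delete_index_less[OF pq] delete_index_less[OF c a(1) \<open>a \<noteq> c\<close>[symmetric]] k l
      by simp_all
    ultimately have "\<bar>det (mat_delete A q a)\<bar> \<in> det_values l'"
      using sparse_sign_mat_delete[OF sparse] col_support_mat_delete_subset[OF A a(1) c \<open>a \<noteq> c\<close> pq(3) col]
      by (metis abs_det_mem_det_values_if_col_support)
    then show ?thesis
      using det_A double_mem_det_values[of _ l'] k l by simp
  qed
qed

lemma abs_det_mem_det_values:
  fixes A :: "'a::linordered_idom mat"
  assumes "A \<in> carrier_mat k k" "sparse_sign_mat A"
  shows "\<bar>det A\<bar> \<in> det_values k"
  using assms
proof (induction k arbitrary: A rule: less_induct)
  case (less k)
  show ?case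
  proof (cases k)
    case 0
    then show ?thesis using less.prems by (auto simp: det_values_def intro: exI[of _ 0])
  next
    case (Suc l)
    obtain c where c: "c < k" "card (col_support A c) \<le> 2"
      using less.prems Suc exists_col_support_card_le_two[of A k]
      by (auto simp: sparse_sign_mat_def)
    have "finite (col_support A c)" "col_support A c \<subseteq> {..<k}" "0 < k"
      using less.prems Suc by (auto simp: col_support_def)
    then show ?thesis
    proof (rule card_le_two_cases[OF _ c(2)])
      fix p assume "p < k" "col_support A c \<subseteq> {p}"
      have "\<And>M :: 'a mat. M \<in> carrier_mat l l \<Longrightarrow> sparse_sign_mat M \<Longrightarrow> \<bar>det M\<bar> \<in> det_values l"
        using less.IH[of l] Suc by simp
      then have "\<bar>det A\<bar> \<in> det_values l"
        using less.prems \<open>p < k\<close> c(1) \<open>col_support A c \<subseteq> {p}\<close> unfolding Suc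
        by (rule abs_det_mem_det_values_if_col_support)
      then show ?thesis using det_values_mono[of l k] Suc by auto
    next
      fix p q assume "p < k" "q < k" "p \<noteq> q" "col_support A c = {p, q}"
      with less.IH less.prems c(1) show ?thesis
        by (rule abs_det_mem_det_values_if_two_in_col)
    qed
  qed
qed

lemma pick_less_if_less_card:
  assumes "i < card {a. a < n \<and> a \<in> I}"
  shows "pick I i < n"
proof (rule ccontr)
  have "card {a. a < n \<and> a \<in> I} \<le> card I" if "finite I"
    using that by (intro card_mono) auto
  then have "i < card I \<or> infinite I"
    using assms by fastforce
  moreover assume "\<not> pick I i < n"
  ultimately have "card {a \<in> I. a < n} \<le> i" by (intro card_le_pick) auto
  then show False using assms by (simp add: conj_commute)
qed

lemma inj_on_pick:
  assumes "\<And>i. i \<in> S \<Longrightarrow> i < card I \<or> infinite I"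
  shows "inj_on (pick I) S"
proof (rule inj_onI)
  fix x y assume "x \<in> S" "y \<in> S" "pick I x = pick I y"
  then show "x = y"
    using assms pick_mono[of x I y] pick_mono[of y I x] by (cases x y rule: linorder_cases) auto
qed

lemma sparse_sign_submatrix:
  assumes "sparse_sign_mat A"
  shows "sparse_sign_mat (submatrix A I J)"
  unfolding sparse_sign_mat_def
proof (intro conjI allI impI)
  fix i j assume "i < dim_row (submatrix A I J)" "j < dim_col (submatrix A I J)"
  then show "submatrix A I J $$ (i, j) \<in> {-1, 0, 1}"
    using assms by (auto simp: sparse_sign_mat_def dim_submatrix submatrix_index pick_less_if_less_card)
next
  fix i assume i: "i < dim_row (submatrix A I J)"
  let ?m = "card {j. j < dim_col A \<and> j \<in> J}"
  have "?m \<le> card J" if "finite J"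
    using that by (intro card_mono) auto
  then have J: "j < card J \<or> infinite J" if "j < ?m" for j
    using that by fastforce
  have "pick J ` row_support (submatrix A I J) i \<subseteq> row_support A (pick I i)"
    using i by (auto simp: row_support_def dim_submatrix submatrix_index pick_less_if_less_card)
  moreover have "inj_on (pick J) (row_support (submatrix A I J) i)"
    using J by (intro inj_on_pick) (auto simp: row_support_def dim_submatrix)
  ultimately have "card (row_support (submatrix A I J) i) \<le> card (row_support A (pick I i))"
    by (intro card_inj_on_le) (auto simp: row_support_def)
  also have "\<dots> \<le> 2"
    using assms i by (auto simp: sparse_sign_mat_def dim_submatrix pick_less_if_less_card)
  finally show "card (row_support (submatrix A I J) i) \<le> 2" .
qed

lemma sparse_sign_if_in_Dn:
  assumes "in_Dn n D"
  shows "sparse_sign_mat D"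
  unfolding sparse_sign_mat_def
proof (intro conjI allI impI)
  have D: "D \<in> carrier_mat n n" using assms by (simp add: in_Dn_def)
  fix k assume "k < dim_row D"
  then obtain i r where ir: "valid_pair n i r" "row D k = dvec n i r"
    using assms D by (auto simp: in_Dn_def)
  have entry: "D $$ (k, j) = (if j + 1 = i then 1 else 0)
      + (if int (j + 1) = \<bar>r\<bar> then real_of_int (sgn r) else 0)" if "j < n" for j
  proof -
    have "D $$ (k, j) = row D k $ j" using D \<open>k < dim_row D\<close> that by simp
    then show ?thesis using ir(2) that by (simp add: dvec_def)
  qed
  {
    fix j assume "j < dim_col D"
    then show "D $$ (k, j) \<in> {-1, 0, 1}"
      using entry[of j] ir(1) D by (auto simp: valid_pair_def sgn_if)
  }
  have "row_support D k \<subseteq> {i - 1, nat \<bar>r\<bar> - 1}"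
    using entry D by (auto simp: row_support_def split: if_splits)
  then have "card (row_support D k) \<le> card {i - 1, nat \<bar>r\<bar> - 1}"
    by (rule card_mono[rotated]) simp
  also have "\<dots> \<le> 2" by (simp add: card_insert_le_m1)
  finally show "card (row_support D k) \<le> 2" .
qed

theorem mainTheorem4:
  fixes n :: nat and D :: "real mat" and I J :: "nat set"
  assumes "n \<ge> 2"
    and "in_Dn n D"
    and "I \<subseteq> {..<n}" and "J \<subseteq> {..<n}" and "card I = card J"
  shows "\<bar>det (submatrix D I J)\<bar> \<in> {0} \<union> {2 ^ k | k. k \<le> n div 2}"
proof -
  have D: "D \<in> carrier_mat n n"
    using assms(2) by (simp add: in_Dn_def)
  have "{i. i < dim_row D \<and> i \<in> I} = I" "{j. j < dim_col D \<and> j \<in> J} = J"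
    using D assms(3,4) by auto
  then have "submatrix D I J \<in> carrier_mat (card I) (card I)"
    using assms(5) by (intro carrier_matI) (simp_all add: dim_submatrix)
  moreover have "sparse_sign_mat (submatrix D I J)"
    using sparse_sign_submatrix[OF sparse_sign_if_in_Dn[OF assms(2)]] .
  ultimately have "\<bar>det (submatrix D I J)\<bar> \<in> det_values (card I)"
    by (rule abs_det_mem_det_values)
  moreover have "card I \<le> n"
    using card_mono[OF finite_lessThan assms(3)] by simp
  ultimately have "\<bar>det (submatrix D I J)\<bar> \<in> det_values n"
    using det_values_mono[of "card I" n] by blast
  then show ?thesis by (simp only: det_values_def)
qed

end
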